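(* Let $V$ be a vector space over $\mathbb{F}_2$ and let $\xi\in\mathbb{F}_2[V]$ be nonzero, with $d=|D(\xi)|$. (i) If $\xi\in I[V]$, then $d\geq 2$ and there are $1$-fold Pfister elements $\pi_1,\ldots,\pi_p$ with $\xi=\pi_1+\cdots+\pi_p$ and $p\leq d$; if moreover $0\in D(\xi)$, such a decomposition exists with $p\leq d-1$. (ii) If $\xi\in I[V]$ and $\varepsilon_1(\xi)=0$, then $d\geq 4$ and there are $2$-fold Pfister elements $\pi_1,\ldots,\pi_p$ with $\xi=\pi_1+\cdots+\pi_p$ and $p\leq d-2$; if moreover $0\in D(\xi)$, such a decomposition exists with $p\leq d-3$.
   Context: For an $\mathbb{F}_2$-vector space $V$, $\mathbb{F}_2[V]$ is the group algebra, whose elements are finite sums $\sum_{v\in V}\alpha_vX^v$ ($\alpha_v\in\mathbb{F}_2$), with $X^0=1$ and $X^uX^v=X^{u+v}$. Define group homomorphisms $\varepsilon_0:\mathbb{F}_2[V]\to\mathbb{F}_2$, $\varepsilon_0(\sum\alpha_vX^v)=\sum\alpha_v$ (augmentation), and $\varepsilon_1:\mathbb{F}_2[V]\to V$, $\varepsilon_1(\sum\alpha_vX^v)=\sum\alpha_v v$. $I[V]=\ker\varepsilon_0$. For $m\geq1$, an $m$-fold Pfister element is a product $(1+X^{v_1})\cdots(1+X^{v_m})$ with $v_1,\ldots,v_m\in V$ (so $0$ is an $m$-fold Pfister element). The support of $\xi=\sum\alpha_vX^v$ is $D(\xi)=\{v\in V\mid \alpha_v=1\}$. *)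

theory Defs
  imports "HOL-Library.Poly_Mapping" "HOL-Library.Z2"
begin

text \<open>The group algebra F2[V] of an F2-vector space V (= an abelian group with
  v + v = 0) is modelled as the finitely supported functions V -> F2, i.e. the type
  (v =>0 bit), with the convolution product of Poly_Mapping
  (X^u X^v = X^(u+v)).\<close>

definition X :: "'v::monoid_add \<Rightarrow> ('v \<Rightarrow>\<^sub>0 bit)" where
  "X v = Poly_Mapping.single v 1"

definition supp :: "('v \<Rightarrow>\<^sub>0 bit) \<Rightarrow> 'v set" where
  "supp \<xi> = Poly_Mapping.keys \<xi>"

definition eps0 :: "('v \<Rightarrow>\<^sub>0 bit) \<Rightarrow> bit" where
  "eps0 \<xi> = (\<Sum>v\<in>Poly_Mapping.keys \<xi>. Poly_Mapping.lookup \<xi> v)"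

text \<open>epsilon_1: sum of alpha_v v; over F2, alpha_v v = v on the support, 0 otherwise\<close>
definition eps1 :: "('v::comm_monoid_add \<Rightarrow>\<^sub>0 bit) \<Rightarrow> 'v" where
  "eps1 \<xi> = (\<Sum>v\<in>Poly_Mapping.keys \<xi>. v)"

definition augIdeal :: "('v \<Rightarrow>\<^sub>0 bit) set" where
  "augIdeal = {\<xi>. eps0 \<xi> = 0}"

definition pfister :: "nat \<Rightarrow> ('v::monoid_add \<Rightarrow>\<^sub>0 bit) \<Rightarrow> bool" where
  "pfister m \<pi> \<longleftrightarrow> (\<exists>vs. length vs = m \<and> \<pi> = prod_list (map (\<lambda>v. 1 + X v) vs))"

end

theory Submission imports Defs begin

text \<open>Since the augmentation of \<open>\<xi>\<close> is the
  parity of \<open>|D(\<xi>)|\<close>, an element of \<open>I[V]\<close> is the sum of the \<open>pf v\<close> over its support, and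
  \<open>pf 0 = 0\<close> lets one drop \<open>v = 0\<close>. Over \<open>\<bbbF>\<^sub>2\<close> one has
  \<open>pf a + pf b = pf a * pf b + pf (a + b)\<close>, so a sum \<open>pf u\<^sub>1 + \<dots> + pf u\<^sub>n\<close> telescopes into the
  2-fold Pfister elements \<open>pf (u\<^sub>1 + \<dots> + u\<^sub>i) * pf u\<^sub>i\<^sub>+\<^sub>1\<close> plus the single remainder
  \<open>pf (u\<^sub>1 + \<dots> + u\<^sub>n\<^sub>-\<^sub>1)\<close>; when \<open>\<Sum>u\<^sub>i = 0\<close> this remainder equals \<open>pf u\<^sub>n\<close> and cancels, leaving
  \<open>n - 2\<close> terms. Two distinct vectors never sum to \<open>0\<close>, which excludes \<open>d = 2\<close> in (ii).\<close>

lemma bit_add_self: "(a::bit) + a = 0"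
  by (cases a) simp_all

lemma poly_mapping_bit_add_self: "(x::'v \<Rightarrow>\<^sub>0 bit) + x = 0"
  by (rule poly_mapping_eqI) (simp add: lookup_add bit_add_self)

lemma of_nat_bit: "(of_nat n :: bit) = of_bool (odd n)"
  by (induction n) auto

lemma of_nat_even_poly_mapping_bit: "even n \<Longrightarrow> (of_nat n :: 'v::monoid_add \<Rightarrow>\<^sub>0 bit) = 0"
  by (simp flip: single_of_nat add: of_nat_bit)

lemma X_mult: "X (a::'v::monoid_add) * X b = X (a + b)"
  by (simp add: X_def mult_single)

definition pf :: "'v::monoid_add \<Rightarrow> ('v \<Rightarrow>\<^sub>0 bit)" where
  "pf v = 1 + X v"

lemma pf_0: "pf (0::'v::monoid_add) = 0"
  by (simp add: pf_def X_def poly_mapping_bit_add_self)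

lemma pfister_1_pf: "pfister 1 (pf v)"
  unfolding pfister_def by (rule exI[of _ "[v]"]) (simp add: pf_def)

lemma pfister_2_pf_mult: "pfister 2 (pf a * pf b)"
  unfolding pfister_def by (rule exI[of _ "[a, b]"]) (simp add: pf_def)

lemma pf_add_pf: "pf (a::'v::comm_monoid_add) + pf b = pf a * pf b + pf (a + b)"
proof -
  have "pf a * pf b = 1 + X a + X b + X (a + b)"
    by (simp add: pf_def distrib_left distrib_right X_mult add.assoc)
  then have "pf a * pf b + pf (a + b) = (pf a + pf b) + (X (a + b) + X (a + b))"
    by (simp only: pf_def ac_simps)
  then show ?thesis
    by (simp only: poly_mapping_bit_add_self add_0_right)
qed

lemma sum_pf: "finite S \<Longrightarrow> (\<Sum>v\<in>S. pf v) = of_nat (card S) + (\<Sum>v\<in>S. X v)"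
  by (simp add: pf_def sum.distrib)

lemma sum_pf_eq_sum_pfister_1:
  assumes "finite S"
  shows "\<exists>\<pi>s. (\<forall>\<pi>\<in>set \<pi>s. pfister 1 \<pi>) \<and> (\<Sum>v\<in>S. pf v) = sum_list \<pi>s \<and> length \<pi>s = card S"
proof -
  obtain vs where "distinct vs" "set vs = S"
    using finite_distinct_list[OF assms] by blast
  then show ?thesis
    by (intro exI[of _ "map pf vs"])
       (auto simp: pfister_1_pf sum_list_distinct_conv_sum_set distinct_card simp del: One_nat_def)
qed

fun pf_chain :: "'v::comm_monoid_add \<Rightarrow> 'v list \<Rightarrow> ('v \<Rightarrow>\<^sub>0 bit) list" where
  "pf_chain s [] = []"
| "pf_chain s (v # vs) = pf s * pf v # pf_chain (s + v) vs"

lemma length_pf_chain: "length (pf_chain s vs) = length vs"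
  by (induction vs arbitrary: s) auto

lemma pfister_2_pf_chain: "\<pi> \<in> set (pf_chain s vs) \<Longrightarrow> pfister 2 \<pi>"
  by (induction vs arbitrary: s) (auto simp: pfister_2_pf_mult)

lemma pf_add_sum_list_pf:
  "pf s + sum_list (map pf vs) = pf (s + sum_list vs) + sum_list (pf_chain s vs)"
proof (induction vs arbitrary: s)
  case (Cons v vs)
  have "pf s + sum_list (map pf (v # vs)) = pf s * pf v + (pf (s + v) + sum_list (map pf vs))"
    by (simp add: pf_add_pf add.assoc)
  also have "\<dots> = pf s * pf v + (pf (s + v + sum_list vs) + sum_list (pf_chain (s + v) vs))"
    using Cons by simp
  finally show ?case
    by (simp add: algebra_simps)
qed simp

lemma sum_list_pf_eq_sum_pfister_2:
  fixes us :: "'v::ab_group_add list"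
  assumes char2: "\<And>v::'v. v + v = 0" and "2 \<le> length us" and "sum_list us = 0"
  shows "\<exists>\<pi>s. (\<forall>\<pi>\<in>set \<pi>s. pfister 2 \<pi>) \<and> sum_list (map pf us) = sum_list \<pi>s
              \<and> length \<pi>s = length us - 2"
proof -
  obtain a rest where "us = a # rest" "rest \<noteq> []"
    using assms(2) by (cases us) (auto simp: Suc_le_length_iff)
  then obtain ws w where us: "us = a # ws @ [w]"
    by (metis rev_exhaust)
  have "a + sum_list ws + w = 0"
    using assms(3) by (simp add: us add.assoc)
  moreover have "a + sum_list ws = (a + sum_list ws + w) + w"
    by (simp add: add.assoc char2)
  ultimately have w: "a + sum_list ws = w"
    by simp
  have "sum_list (map pf us) = (pf a + sum_list (map pf ws)) + pf w"
    by (simp add: us add.assoc)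
  also have "\<dots> = sum_list (pf_chain a ws)"
    by (simp add: pf_add_sum_list_pf w add.assoc add.commute[of "pf w"] poly_mapping_bit_add_self)
  finally show ?thesis
    by (intro exI[of _ "pf_chain a ws"]) (auto simp: pfister_2_pf_chain length_pf_chain us)
qed

lemma sum_pf_eq_sum_pfister_2:
  fixes S :: "'v::ab_group_add set"
  assumes char2: "\<And>v::'v. v + v = 0" and "finite S" "2 \<le> card S" "\<Sum>S = 0"
  shows "\<exists>\<pi>s. (\<forall>\<pi>\<in>set \<pi>s. pfister 2 \<pi>) \<and> (\<Sum>v\<in>S. pf v) = sum_list \<pi>s \<and> length \<pi>s = card S - 2"
proof -
  obtain us where us: "distinct us" "set us = S"
    using finite_distinct_list[OF assms(2)] by blast
  then have len: "length us = card S"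
    using distinct_card by fastforce
  have "sum_list us = 0"
    using us assms(4) by (simp add: sum_list_distinct_conv_sum_set[of _ id, simplified])
  then show ?thesis
    using sum_list_pf_eq_sum_pfister_2[OF char2, of us] assms(3) us len
    by (simp add: sum_list_distinct_conv_sum_set)
qed

lemma sum_X_keys: "(\<Sum>v\<in>Poly_Mapping.keys \<xi>. X v) = (\<xi>::'v::monoid_add \<Rightarrow>\<^sub>0 bit)"
proof (rule poly_mapping_eqI)
  fix k
  have "Poly_Mapping.lookup (\<Sum>v\<in>Poly_Mapping.keys \<xi>. X v) k
      = (\<Sum>v\<in>Poly_Mapping.keys \<xi>. if v = k then 1 else 0)"
    by (simp add: lookup_sum X_def lookup_single when_def eq_commute)
  also have "\<dots> = Poly_Mapping.lookup \<xi> k"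
    by (auto simp: in_keys_iff)
  finally show "Poly_Mapping.lookup (\<Sum>v\<in>Poly_Mapping.keys \<xi>. X v) k = Poly_Mapping.lookup \<xi> k" .
qed

lemma eps0_eq_card_supp: "eps0 \<xi> = of_nat (card (supp \<xi>))"
proof -
  have "eps0 \<xi> = (\<Sum>v\<in>Poly_Mapping.keys \<xi>. 1)"
    unfolding eps0_def by (rule sum.cong) (auto simp: in_keys_iff)
  then show ?thesis
    by (simp add: supp_def)
qed

lemma augIdeal_iff_even_card_supp: "\<xi> \<in> augIdeal \<longleftrightarrow> even (card (supp \<xi>))"
  by (simp add: augIdeal_def eps0_eq_card_supp of_nat_bit)

lemma augIdeal_eq_sum_pf:
  assumes "(\<xi>::'v::ab_group_add \<Rightarrow>\<^sub>0 bit) \<in> augIdeal"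
  shows "\<xi> = (\<Sum>v\<in>supp \<xi> - {0}. pf v)"
proof -
  have "\<xi> = (\<Sum>v\<in>supp \<xi>. pf v)"
    using assms by (simp add: sum_pf supp_def sum_X_keys augIdeal_iff_even_card_supp
        of_nat_even_poly_mapping_bit)
  also have "\<dots> = (\<Sum>v\<in>supp \<xi> - {0}. pf v)"
    by (simp add: sum_diff1 pf_0 supp_def)
  finally show ?thesis .
qed

lemma card_supp_ge_2:
  assumes "\<xi> \<noteq> 0" "\<xi> \<in> augIdeal"
  shows "2 \<le> card (supp \<xi>)"
proof -
  have "card (supp \<xi>) \<noteq> 0"
    using assms(1) by (simp add: supp_def)
  moreover have "even (card (supp \<xi>))"
    using assms(2) by (simp add: augIdeal_iff_even_card_supp)
  ultimately show ?thesis
    by (auto elim!: evenE)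
qed

lemma sum_ne_0_if_card_2:
  fixes S :: "'v::ab_group_add set"
  assumes char2: "\<And>v::'v. v + v = 0" and "card S = 2"
  shows "\<Sum>S \<noteq> 0"
proof
  assume sum0: "\<Sum>S = 0"
  obtain a b where ab: "a \<noteq> b" "S = {a, b}"
    using assms(2) by (auto simp: card_2_iff)
  then have "b = - a"
    using sum0 by (simp add: add_eq_0_iff2)
  moreover have "a = - a"
    using char2[of a] by (simp add: add_eq_0_iff2)
  ultimately show False
    using ab(1) by metis
qed

lemma card_supp_ge_4:
  fixes \<xi> :: "'v::ab_group_add \<Rightarrow>\<^sub>0 bit"
  assumes char2: "\<And>v::'v. v + v = 0" and "\<xi> \<noteq> 0" "\<xi> \<in> augIdeal" "eps1 \<xi> = 0"
  shows "4 \<le> card (supp \<xi>)"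
proof -
  have "card (supp \<xi>) \<noteq> 2"
    using sum_ne_0_if_card_2[OF char2] assms(4) by (auto simp: eps1_def supp_def)
  moreover have "even (card (supp \<xi>))"
    using assms(3) by (simp add: augIdeal_iff_even_card_supp)
  ultimately show ?thesis
    using card_supp_ge_2[OF assms(2,3)] by (auto elim!: evenE)
qed

lemma augIdeal_eq_sum_pfister_1:
  fixes \<xi> :: "'v::ab_group_add \<Rightarrow>\<^sub>0 bit"
  assumes "\<xi> \<in> augIdeal"
  shows "\<exists>\<pi>s. (\<forall>\<pi>\<in>set \<pi>s. pfister 1 \<pi>) \<and> \<xi> = sum_list \<pi>s \<and> length \<pi>s = card (supp \<xi> - {0})"
  using sum_pf_eq_sum_pfister_1[of "supp \<xi> - {0}"] augIdeal_eq_sum_pf[OF assms]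
  by (simp add: supp_def)

lemma augIdeal_eq_sum_pfister_2:
  fixes \<xi> :: "'v::ab_group_add \<Rightarrow>\<^sub>0 bit"
  assumes char2: "\<And>v::'v. v + v = 0" and "\<xi> \<noteq> 0" "\<xi> \<in> augIdeal" "eps1 \<xi> = 0"
  shows "\<exists>\<pi>s. (\<forall>\<pi>\<in>set \<pi>s. pfister 2 \<pi>) \<and> \<xi> = sum_list \<pi>s \<and> length \<pi>s = card (supp \<xi> - {0}) - 2"
proof -
  have "2 \<le> card (supp \<xi> - {0})"
    using card_supp_ge_4[OF assms] card_Diff1_le[of "supp \<xi>" 0] card_Diff_singleton[of 0 "supp \<xi>"]
    by (cases "0 \<in> supp \<xi>") (auto simp: supp_def)
  moreover have "\<Sum>(supp \<xi> - {0}) = 0"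
    using assms(4) by (simp add: eps1_def supp_def sum_diff1)
  ultimately show ?thesis
    using sum_pf_eq_sum_pfister_2[OF char2, of "supp \<xi> - {0}"] augIdeal_eq_sum_pf[OF assms(3)]
    by (simp add: supp_def)
qed

theorem lemma1p1:
  fixes \<xi> :: "'v::ab_group_add \<Rightarrow>\<^sub>0 bit"
  assumes char2: "\<And>v::'v. v + v = 0"
    and nz: "\<xi> \<noteq> 0"
  defines "d \<equiv> card (supp \<xi>)"
  shows "(\<xi> \<in> augIdeal \<longrightarrow>
            d \<ge> 2
          \<and> (\<exists>\<pi>s. (\<forall>\<pi>\<in>set \<pi>s. pfister 1 \<pi>) \<and> \<xi> = sum_list \<pi>s \<and> length \<pi>s \<le> d)
          \<and> (0 \<in> supp \<xi> \<longrightarrow>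
               (\<exists>\<pi>s. (\<forall>\<pi>\<in>set \<pi>s. pfister 1 \<pi>) \<and> \<xi> = sum_list \<pi>s \<and> length \<pi>s \<le> d - 1)))
       \<and> (\<xi> \<in> augIdeal \<and> eps1 \<xi> = 0 \<longrightarrow>
            d \<ge> 4
          \<and> (\<exists>\<pi>s. (\<forall>\<pi>\<in>set \<pi>s. pfister 2 \<pi>) \<and> \<xi> = sum_list \<pi>s \<and> length \<pi>s \<le> d - 2)
          \<and> (0 \<in> supp \<xi> \<longrightarrow>
               (\<exists>\<pi>s. (\<forall>\<pi>\<in>set \<pi>s. pfister 2 \<pi>) \<and> \<xi> = sum_list \<pi>s \<and> length \<pi>s \<le> d - 3)))"
proof -
  have card_S: "card (supp \<xi> - {0}) = (if 0 \<in> supp \<xi> then d - 1 else d)"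
    by (simp add: d_def)
  show ?thesis
  proof (intro conjI impI; (elim conjE)?)
    assume aug: "\<xi> \<in> augIdeal"
    show "d \<ge> 2"
      using card_supp_ge_2[OF nz aug] by (simp add: d_def)
    obtain \<pi>s where \<pi>s: "\<forall>\<pi>\<in>set \<pi>s. pfister 1 \<pi>" "\<xi> = sum_list \<pi>s"
      and len: "length \<pi>s = card (supp \<xi> - {0})"
      using augIdeal_eq_sum_pfister_1[OF aug] by blast
    have "length \<pi>s \<le> d" and "0 \<in> supp \<xi> \<Longrightarrow> length \<pi>s \<le> d - 1"
      using len card_S by auto
    with \<pi>s show "\<exists>\<pi>s. (\<forall>\<pi>\<in>set \<pi>s. pfister 1 \<pi>) \<and> \<xi> = sum_list \<pi>s \<and> length \<pi>s \<le> d"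
      and "0 \<in> supp \<xi> \<Longrightarrow> \<exists>\<pi>s. (\<forall>\<pi>\<in>set \<pi>s. pfister 1 \<pi>) \<and> \<xi> = sum_list \<pi>s \<and> length \<pi>s \<le> d - 1"
      by blast+
  next
    assume aug: "\<xi> \<in> augIdeal" and eps1: "eps1 \<xi> = 0"
    show "d \<ge> 4"
      using card_supp_ge_4[OF char2 nz aug eps1] by (simp add: d_def)
    obtain \<pi>s where \<pi>s: "\<forall>\<pi>\<in>set \<pi>s. pfister 2 \<pi>" "\<xi> = sum_list \<pi>s"
      and len: "length \<pi>s = card (supp \<xi> - {0}) - 2"
      using augIdeal_eq_sum_pfister_2[OF char2 nz aug eps1] by blast
    have "length \<pi>s \<le> d - 2" and "0 \<in> supp \<xi> \<Longrightarrow> length \<pi>s \<le> d - 3"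
      using len card_S by auto
    with \<pi>s show "\<exists>\<pi>s. (\<forall>\<pi>\<in>set \<pi>s. pfister 2 \<pi>) \<and> \<xi> = sum_list \<pi>s \<and> length \<pi>s \<le> d - 2"
      and "0 \<in> supp \<xi> \<Longrightarrow> \<exists>\<pi>s. (\<forall>\<pi>\<in>set \<pi>s. pfister 2 \<pi>) \<and> \<xi> = sum_list \<pi>s \<and> length \<pi>s \<le> d - 3"
      by blast+
  qed
qed

end
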